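(* Let $\mathbf G\in\mathbb R^{d\times d}_{\rm sym}$ with eigenvalues $g_1,\dots,g_d$, and let $f$ be a real function defined in a neighbourhood of $\{\frac{g_i-g_j}2\}_{i,j=1}^d$. Decompose $f=f_0+f_{\rm odd}+f_{\rm even}$ with $f_0:=f(0)$, $f_{\rm odd}(x):=\frac{f(x)-f(-x)}2$, $f_{\rm even}(x):=\frac{f(x)+f(-x)}2-f(0)$. Then for all $\mathbf X\in\mathbb R^{d\times d}$: (i) If $d=1$, or if all eigenvalues coincide, $f(\mathsf{Ad}_{\mathbf G})\mathbf X=f_0\mathbf X$. (ii) If $d=2$ and $g_1\ne g_2$, $f(\mathsf{Ad}_{\mathbf G})\mathbf X=f_0\mathbf X+\frac{f_{\rm odd}(\frac{g_1-g_2}2)}{g_1-g_2}(\mathbf G\mathbf X-\mathbf X\mathbf G)+\frac{f_{\rm even}(\frac{g_1-g_2}2)}{(g_1-g_2)^2}\big(-2g_1g_2\mathbf X+(g_1+g_2)(\mathbf G\mathbf X+\mathbf X\mathbf G)-2\mathbf G\mathbf X\mathbf G\big).$ (iii) If $d=3$ and $g_1,g_2,g_3$ are pairwise distinct, $f(\mathsf{Ad}_{\mathbf G})\mathbf X=-K_2(\mathbf G\mathbf X-\mathbf X\mathbf G)+K_1(\mathbf G^2\mathbf X-\mathbf X\mathbf G^2)-K_0(\mathbf G^2\mathbf X\mathbf G-\mathbf G\mathbf X\mathbf G^2)+(f_0+2J_3L_1)\mathbf X-(J_2L_1+J_3L_0)(\mathbf G\mathbf X+\mathbf X\mathbf G)+2(L_2+J_2L_0)\mathbf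 G\mathbf X\mathbf G+(J_1L_1-L_2)(\mathbf G^2\mathbf X+\mathbf X\mathbf G^2)-(L_1+J_1L_0)(\mathbf G^2\mathbf X\mathbf G+\mathbf G\mathbf X\mathbf G^2)+2L_0\mathbf G^2\mathbf X\mathbf G^2,$ where $J_1=g_1+g_2+g_3$, $J_2=g_1g_2+g_2g_3+g_3g_1$, $J_3=g_1g_2g_3$ and, for $n=0,1,2$, $K_n=\frac{g_1^nf_{\rm odd}(\frac{g_2-g_3}2)+g_2^nf_{\rm odd}(\frac{g_3-g_1}2)+g_3^nf_{\rm odd}(\frac{g_1-g_2}2)}{(g_1-g_2)(g_2-g_3)(g_3-g_1)}$, $L_n=\frac{g_1^n\frac{f_{\rm even}((g_2-g_3)/2)}{g_2-g_3}+g_2^n\frac{f_{\rm even}((g_3-g_1)/2)}{g_3-g_1}+g_3^n\frac{f_{\rm even}((g_1-g_2)/2)}{g_1-g_2}}{(g_1-g_2)(g_2-g_3)(g_3-g_1)}$. If $d=3$ and exactly two eigenvalues are distinct, the formula in (ii) holds (with the indices relabelled so that $g_1\ne g_2$ denote the two distinct eigenvalues).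
   Context: For $\mathbf G\in\mathbb R^{d\times d}$, $\mathsf{Ad}_{\mathbf G}\mathbf X=\tfrac12(\mathbf G\mathbf X-\mathbf X\mathbf G)$ on $\mathbb R^{d\times d}$. For $\mathbf G\in\mathbb R^{d\times d}_{\rm sym}$ write $\mathbf G=\mathbf Q\operatorname{diag}(g_1,\dots,g_d)\mathbf Q^{\mathsf T}$ with $\mathbf Q$ orthogonal. For a function $h$ defined near the points $\frac{g_i-g_j}2$, $h(\mathsf{Ad}_{\mathbf G})\mathbf X:=\mathbf Q\big([h(\frac{g_i-g_j}2)]\odot(\mathbf Q^{\mathsf T}\mathbf X\mathbf Q)\big)\mathbf Q^{\mathsf T}$, where $[m_{ij}]$ is the matrix with entries $m_{ij}$, $\odot$ the entrywise product, and removable discontinuities of $h$ are replaced by limits. *)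

theory Defs
  imports "HOL-Analysis.Analysis"
begin

definition diagm :: "real^'n \<Rightarrow> real^'n^'n" where
  "diagm g = (\<chi> i j. if i = j then g $ i else 0)"

text \<open>h(Ad_G) X, computed from an orthogonal diagonalisation G = Q diag(g) Q^T:
  Q ([h((g_i - g_j)/2)] \<odot> (Q^T X Q)) Q^T.\<close>
definition fAd :: "(real \<Rightarrow> real) \<Rightarrow> real^'n^'n \<Rightarrow> real^'n \<Rightarrow> real^'n^'n \<Rightarrow> real^'n^'n" where
  "fAd h Q g X = Q ** (\<chi> i j. h ((g $ i - g $ j) / 2) * ((transpose Q ** X ** Q) $ i $ j)) ** transpose Q"

definition fodd :: "(real \<Rightarrow> real) \<Rightarrow> real \<Rightarrow> real" where
  "fodd f x = (f x - f (- x)) / 2"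

definition feven :: "(real \<Rightarrow> real) \<Rightarrow> real \<Rightarrow> real" where
  "feven f x = (f x + f (- x)) / 2 - f 0"

definition formula2 :: "(real \<Rightarrow> real) \<Rightarrow> real \<Rightarrow> real \<Rightarrow> real^'n^'n \<Rightarrow> real^'n^'n \<Rightarrow> real^'n^'n" where
  "formula2 f a b G X =
     f 0 *\<^sub>R X
   + (fodd f ((a - b) / 2) / (a - b)) *\<^sub>R (G ** X - X ** G)
   + (feven f ((a - b) / 2) / (a - b)^2) *\<^sub>R
        ((- 2 * a * b) *\<^sub>R X + (a + b) *\<^sub>R (G ** X + X ** G) - 2 *\<^sub>R (G ** X ** G))"

definition Kc :: "(real \<Rightarrow> real) \<Rightarrow> real \<Rightarrow> real \<Rightarrow> real \<Rightarrow> nat \<Rightarrow> real" where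
  "Kc f g1 g2 g3 n =
     (g1^n * fodd f ((g2 - g3) / 2) + g2^n * fodd f ((g3 - g1) / 2) + g3^n * fodd f ((g1 - g2) / 2))
     / ((g1 - g2) * (g2 - g3) * (g3 - g1))"

definition Lc :: "(real \<Rightarrow> real) \<Rightarrow> real \<Rightarrow> real \<Rightarrow> real \<Rightarrow> nat \<Rightarrow> real" where
  "Lc f g1 g2 g3 n =
     (g1^n * (feven f ((g2 - g3) / 2) / (g2 - g3)) + g2^n * (feven f ((g3 - g1) / 2) / (g3 - g1))
      + g3^n * (feven f ((g1 - g2) / 2) / (g1 - g2)))
     / ((g1 - g2) * (g2 - g3) * (g3 - g1))"

definition formula3 :: "(real \<Rightarrow> real) \<Rightarrow> real \<Rightarrow> real \<Rightarrow> real \<Rightarrow> real^'n^'n \<Rightarrow> real^'n^'n \<Rightarrow> real^'n^'n" where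
  "formula3 f g1 g2 g3 G X =
    (let J1 = g1 + g2 + g3; J2 = g1 * g2 + g2 * g3 + g3 * g1; J3 = g1 * g2 * g3;
         K0 = Kc f g1 g2 g3 0; K1 = Kc f g1 g2 g3 1; K2 = Kc f g1 g2 g3 2;
         L0 = Lc f g1 g2 g3 0; L1 = Lc f g1 g2 g3 1; L2 = Lc f g1 g2 g3 2;
         G2 = G ** G
     in - K2 *\<^sub>R (G ** X - X ** G)
        + K1 *\<^sub>R (G2 ** X - X ** G2)
        - K0 *\<^sub>R (G2 ** X ** G - G ** X ** G2)
        + (f 0 + 2 * J3 * L1) *\<^sub>R X
        - (J2 * L1 + J3 * L0) *\<^sub>R (G ** X + X ** G)
        + (2 * (L2 + J2 * L0)) *\<^sub>R (G ** X ** G)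
        + (J1 * L1 - L2) *\<^sub>R (G2 ** X + X ** G2)
        - (L1 + J1 * L0) *\<^sub>R (G2 ** X ** G + G ** X ** G2)
        + (2 * L0) *\<^sub>R (G2 ** X ** G2))"

end

theory Submission
  imports Defs
begin

text \<open>Since \<open>G = Q diag(g) Q\<^sup>T\<close> with Q orthogonal and conjugation by Q is an automorphism of the
  matrix algebra, a sum \<open>\<Sum> c\<^sub>a\<^sub>b G\<^sup>a X G\<^sup>b\<close> is, in the eigenbasis of G, the entrywise product of
  \<open>Q\<^sup>T X Q\<close> with the symbol \<open>[\<Sum> c\<^sub>a\<^sub>b g\<^sub>i\<^sup>a g\<^sub>j\<^sup>b]\<close>. The right-hand sides of (i)--(iii) are such sums,
  so each formula holds as soon as its symbol agrees with \<open>(x, y) \<mapsto> f ((x - y) / 2)\<close> on pairs of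
  eigenvalues. For two eigenvalues this is a direct check; for three, the symbol is the Lagrange
  interpolant of bidegree two at the nodes \<open>g\<^sub>1, g\<^sub>2, g\<^sub>3\<close>, in which at a pair of distinct nodes only
  the weights \<open>f\<^sub>o\<^sub>d\<^sub>d, f\<^sub>e\<^sub>v\<^sub>e\<^sub>n\<close> attached to the pair survive.\<close>

lemma matrix_add_rdistrib: "((A :: 'a::semiring_1^'n^'m) + B) ** C = A ** C + B ** C"
  by (vector matrix_matrix_mult_def sum.distrib[symmetric] distrib_right)

lemma matrix_diff_ldistrib: "(A :: 'a::ring_1^'n^'m) ** (B - C) = A ** B - A ** C"
  by (vector matrix_matrix_mult_def sum_subtractf[symmetric] right_diff_distrib)

lemma matrix_diff_rdistrib: "((A :: 'a::ring_1^'n^'m) - B) ** C = A ** C - B ** C"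
  by (vector matrix_matrix_mult_def sum_subtractf[symmetric] left_diff_distrib)

definition orth_conj :: "real^'n^'n \<Rightarrow> real^'n^'n \<Rightarrow> real^'n^'n" where
  "orth_conj Q M = Q ** M ** transpose Q"

lemma orth_conj_mult:
  assumes "orthogonal_matrix Q"
  shows "orth_conj Q (A ** B) = orth_conj Q A ** orth_conj Q B"
proof -
  have "Q ** A ** transpose Q ** (Q ** B ** transpose Q)
      = Q ** A ** (transpose Q ** Q) ** B ** transpose Q"
    by (simp add: matrix_mul_assoc)
  also have "\<dots> = Q ** (A ** B) ** transpose Q"
    using assms by (simp add: orthogonal_matrix_def matrix_mul_assoc)
  finally show ?thesis
    by (simp add: orth_conj_def)
qed

lemma orth_conj_add: "orth_conj Q (A + B) = orth_conj Q A + orth_conj Q B"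
  by (simp add: orth_conj_def matrix_add_ldistrib matrix_add_rdistrib)

lemma orth_conj_diff: "orth_conj Q (A - B) = orth_conj Q A - orth_conj Q B"
  by (simp add: orth_conj_def matrix_diff_ldistrib matrix_diff_rdistrib)

lemma orth_conj_scaleR: "orth_conj Q (c *\<^sub>R A) = c *\<^sub>R orth_conj Q A"
  by (simp add: orth_conj_def scalar_matrix_assoc matrix_scalar_ac)

lemma orth_conj_transpose_conj:
  assumes "orthogonal_matrix Q"
  shows "orth_conj Q (transpose Q ** X ** Q) = X"
proof -
  have "Q ** (transpose Q ** X ** Q) ** transpose Q = (Q ** transpose Q) ** X ** (Q ** transpose Q)"
    by (simp add: matrix_mul_assoc)
  then show ?thesis
    using assms by (simp add: orth_conj_def orthogonal_matrix_def)
qed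

definition schur_mult :: "(real \<Rightarrow> real \<Rightarrow> real) \<Rightarrow> real^'n \<Rightarrow> real^'n^'n \<Rightarrow> real^'n^'n" where
  "schur_mult c g Y = (\<chi> i j. c (g $ i) (g $ j) * Y $ i $ j)"

lemma fAd_eq_orth_conj_schur_mult:
  "fAd h Q g X = orth_conj Q (schur_mult (\<lambda>x y. h ((x - y) / 2)) g (transpose Q ** X ** Q))"
  by (simp add: fAd_def orth_conj_def schur_mult_def)

lemma diagm_mult_entry [simp]: "(diagm g ** M) $ i $ j = g $ i * M $ i $ j"
  by (simp add: matrix_matrix_mult_def diagm_def if_distrib if_distribR cong: if_cong)

lemma mult_diagm_entry [simp]: "(M ** diagm g) $ i $ j = M $ i $ j * g $ j"
  by (simp add: matrix_matrix_mult_def diagm_def if_distrib if_distribR cong: if_cong)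

lemma diagm_mult_diagm: "diagm g ** diagm h = diagm (\<chi> i. g $ i * h $ i)"
  by (simp add: vec_eq_iff) (simp add: diagm_def)

lemma fAd_eq_by_symbol:
  assumes Q: "orthogonal_matrix Q" and G: "G = Q ** diagm g ** transpose Q"
    and equivariant: "\<And>A B. F (orth_conj Q A) (orth_conj Q B) = orth_conj Q (F A B)"
    and diagonal: "\<And>Y. F (diagm g) Y = schur_mult c g Y"
    and interpolates: "\<And>i j. c (g $ i) (g $ j) = f ((g $ i - g $ j) / 2)"
  shows "fAd f Q g X = F G X"
proof -
  define Y where "Y = transpose Q ** X ** Q"
  have "F G X = F (orth_conj Q (diagm g)) (orth_conj Q Y)"
    using G orth_conj_transpose_conj[OF Q] by (simp add: orth_conj_def Y_def)
  also have "\<dots> = orth_conj Q (schur_mult c g Y)"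
    by (simp add: equivariant diagonal)
  also have "schur_mult c g Y = schur_mult (\<lambda>x y. f ((x - y) / 2)) g Y"
    by (simp add: schur_mult_def interpolates)
  finally show ?thesis
    by (simp add: fAd_eq_orth_conj_schur_mult Y_def)
qed

lemma fodd_plus_feven: "f 0 + fodd f t + feven f t = f t"
  by (simp add: fodd_def feven_def field_simps)

lemma fodd_minus: "fodd f (- t) = - fodd f t"
  by (simp add: fodd_def field_simps)

lemma feven_minus: "feven f (- t) = feven f t"
  by (simp add: feven_def)

definition symbol2 :: "(real \<Rightarrow> real) \<Rightarrow> real \<Rightarrow> real \<Rightarrow> real \<Rightarrow> real \<Rightarrow> real" where
  "symbol2 f a b x y = f 0 + fodd f ((a - b) / 2) / (a - b) * (x - y)
     + feven f ((a - b) / 2) / (a - b)^2 * (- 2 * a * b + (a + b) * (x + y) - 2 * x * y)"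

lemma formula2_diagm: "formula2 f a b (diagm g) Y = schur_mult (symbol2 f a b) g Y"
proof -
  define p q where "p = fodd f ((a - b) / 2) / (a - b)" and "q = feven f ((a - b) / 2) / (a - b)^2"
  show ?thesis
    unfolding formula2_def symbol2_def p_def[symmetric] q_def[symmetric]
    by (simp add: vec_eq_iff schur_mult_def algebra_simps)
qed

lemma formula2_orth_conj:
  assumes "orthogonal_matrix Q"
  shows "formula2 f a b (orth_conj Q A) (orth_conj Q B) = orth_conj Q (formula2 f a b A B)"
  by (simp add: formula2_def orth_conj_mult[OF assms] orth_conj_add orth_conj_diff orth_conj_scaleR)

lemma f_half_diff_eq:
  assumes "u = fodd f ((a - b) / 2)" and "v * (a - b) = feven f ((a - b) / 2)"
  shows "f ((a - b) / 2) = f 0 + u + v * (a - b)" and "f ((b - a) / 2) = f 0 - u + v * (a - b)"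
proof -
  define t where "t = (a - b) / 2"
  have "(b - a) / 2 = - t"
    by (simp add: t_def field_simps)
  then show "f ((a - b) / 2) = f 0 + u + v * (a - b)" "f ((b - a) / 2) = f 0 - u + v * (a - b)"
    using assms[folded t_def] fodd_plus_feven[of f t] fodd_plus_feven[of f "- t"]
    unfolding t_def[symmetric] by (simp_all add: fodd_minus feven_minus)
qed

lemma symbol2_interpolates:
  assumes d: "a \<noteq> b" and x: "x = a \<or> x = b" and y: "y = a \<or> y = b"
  shows "symbol2 f a b x y = f ((x - y) / 2)"
proof -
  define u v where "u = fodd f ((a - b) / 2)" and "v = feven f ((a - b) / 2) / (a - b)"
  have "- 2 * a * b + (a + b) * (x + y) - 2 * x * y = (x - y)^2 - (x - a) * (x - b) - (y - a) * (y - b)"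
    by (simp add: power2_eq_square algebra_simps)
  also have "\<dots> = (x - y)^2"
    using x y by auto
  finally have factor: "- 2 * a * b + (a + b) * (x + y) - 2 * x * y = (x - y)^2" .
  have sym: "symbol2 f a b x y = f 0 + u * ((x - y) / (a - b)) + v * (a - b) * ((x - y) / (a - b))^2"
    unfolding symbol2_def factor using d by (simp add: u_def v_def power_divide)
  have v: "v * (a - b) = feven f ((a - b) / 2)"
    using d by (simp add: v_def)
  have "(b - a) / (a - b) = -1"
    using d by (simp add: field_simps)
  then show ?thesis
    using x y d sym f_half_diff_eq[OF u_def v] by (elim disjE) simp_all
qed

lemma lagrange_form_of_moment_symbol:
  fixes g1 g2 g3 u1 u2 u3 v1 v2 v3 x y D F0 :: real
  assumes K: "\<And>n. K n = (g1^n * u1 + g2^n * u2 + g3^n * u3) / D"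
    and L: "\<And>n. L n = (g1^n * v1 + g2^n * v2 + g3^n * v3) / D"
    and J: "J1 = g1 + g2 + g3" "J2 = g1 * g2 + g2 * g3 + g3 * g1" "J3 = g1 * g2 * g3"
  shows "- K 2 * (x - y) + K 1 * (x^2 - y^2) - K 0 * (x^2 * y - x * y^2) + (F0 + 2 * J3 * L 1)
      - (J2 * L 1 + J3 * L 0) * (x + y) + 2 * (L 2 + J2 * L 0) * x * y + (J1 * L 1 - L 2) * (x^2 + y^2)
      - (L 1 + J1 * L 0) * (x^2 * y + x * y^2) + 2 * L 0 * x^2 * y^2
    = F0 + (- (x - y) * (u1 * (g1 - x) * (g1 - y) + u2 * (g2 - x) * (g2 - y) + u3 * (g3 - x) * (g3 - y))
      - (x - y)^2 * (v1 * (x - g1) * (y - g1) + v2 * (x - g2) * (y - g2) + v3 * (x - g3) * (y - g3))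
      + (x - g1) * (x - g2) * (x - g3) * (v1 * (y - g1) + v2 * (y - g2) + v3 * (y - g3))
      + (y - g1) * (y - g2) * (y - g3) * (v1 * (x - g1) + v2 * (x - g2) + v3 * (x - g3))) / D"
proof -
  \<comment> \<open>with \<open>D\<inverse>\<close> as an indeterminate this is a ring identity, so no hypothesis on D is needed\<close>
  define w where "w = inverse D"
  show ?thesis
    unfolding K L J divide_inverse w_def[symmetric] by algebra
qed

definition symbol3 :: "(real \<Rightarrow> real) \<Rightarrow> real \<Rightarrow> real \<Rightarrow> real \<Rightarrow> real \<Rightarrow> real \<Rightarrow> real" where
 "symbol3 f g1 g2 g3 x y =
    (let J1 = g1 + g2 + g3; J2 = g1 * g2 + g2 * g3 + g3 * g1; J3 = g1 * g2 * g3;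
         K0 = Kc f g1 g2 g3 0; K1 = Kc f g1 g2 g3 1; K2 = Kc f g1 g2 g3 2;
         L0 = Lc f g1 g2 g3 0; L1 = Lc f g1 g2 g3 1; L2 = Lc f g1 g2 g3 2
     in - K2 * (x - y) + K1 * (x^2 - y^2) - K0 * (x^2 * y - x * y^2) + (f 0 + 2 * J3 * L1)
      - (J2 * L1 + J3 * L0) * (x + y) + 2 * (L2 + J2 * L0) * x * y + (J1 * L1 - L2) * (x^2 + y^2)
      - (L1 + J1 * L0) * (x^2 * y + x * y^2) + 2 * L0 * x^2 * y^2)"

lemma formula3_diagm: "formula3 f a b c (diagm g) Y = schur_mult (symbol3 f a b c) g Y"
  unfolding formula3_def symbol3_def Let_def
  by (simp add: vec_eq_iff schur_mult_def diagm_mult_diagm algebra_simps power2_eq_square)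

lemma formula3_orth_conj:
  assumes "orthogonal_matrix Q"
  shows "formula3 f a b c (orth_conj Q A) (orth_conj Q B) = orth_conj Q (formula3 f a b c A B)"
  by (simp add: formula3_def Let_def orth_conj_mult[OF assms] orth_conj_add orth_conj_diff
      orth_conj_scaleR)

lemma symbol3_interpolates:
  assumes d: "g1 \<noteq> g2" "g2 \<noteq> g3" "g3 \<noteq> g1"
    and x: "x = g1 \<or> x = g2 \<or> x = g3" and y: "y = g1 \<or> y = g2 \<or> y = g3"
  shows "symbol3 f g1 g2 g3 x y = f ((x - y) / 2)"
proof -
  define u1 u2 u3 where "u1 = fodd f ((g2 - g3) / 2)" and "u2 = fodd f ((g3 - g1) / 2)"
    and "u3 = fodd f ((g1 - g2) / 2)"
  define v1 v2 v3 where "v1 = feven f ((g2 - g3) / 2) / (g2 - g3)"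
    and "v2 = feven f ((g3 - g1) / 2) / (g3 - g1)" and "v3 = feven f ((g1 - g2) / 2) / (g1 - g2)"
  define D where "D = (g1 - g2) * (g2 - g3) * (g3 - g1)"
  have K: "Kc f g1 g2 g3 n = (g1^n * u1 + g2^n * u2 + g3^n * u3) / D" for n
    by (simp add: Kc_def u1_def u2_def u3_def D_def)
  have L: "Lc f g1 g2 g3 n = (g1^n * v1 + g2^n * v2 + g3^n * v3) / D" for n
    by (simp add: Lc_def v1_def v2_def v3_def D_def)
  have sym: "symbol3 f g1 g2 g3 p q = f 0 +
      (- (p - q) * (u1 * (g1 - p) * (g1 - q) + u2 * (g2 - p) * (g2 - q) + u3 * (g3 - p) * (g3 - q))
       - (p - q)^2 * (v1 * (p - g1) * (q - g1) + v2 * (p - g2) * (q - g2) + v3 * (p - g3) * (q - g3))) / D"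
    if "p = g1 \<or> p = g2 \<or> p = g3" and "q = g1 \<or> q = g2 \<or> q = g3" for p q
  proof -
    have p_root: "(p - g1) * (p - g2) * (p - g3) = 0" and q_root: "(q - g1) * (q - g2) * (q - g3) = 0"
      using that by auto
    show ?thesis
      unfolding symbol3_def Let_def lagrange_form_of_moment_symbol[OF K L refl refl refl] p_root q_root
      by simp
  qed
  have "u3 = fodd f ((g1 - g2) / 2)" "v3 * (g1 - g2) = feven f ((g1 - g2) / 2)"
    "u1 = fodd f ((g2 - g3) / 2)" "v1 * (g2 - g3) = feven f ((g2 - g3) / 2)"
    "u2 = fodd f ((g3 - g1) / 2)" "v2 * (g3 - g1) = feven f ((g3 - g1) / 2)"
    using d by (simp_all add: u1_def u2_def u3_def v1_def v2_def v3_def)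
  note f_vals = f_half_diff_eq[OF this(1,2)] f_half_diff_eq[OF this(3,4)] f_half_diff_eq[OF this(5,6)]
  have D: "D \<noteq> 0"
    using d by (simp add: D_def)
  show ?thesis
    using x y D
    by (elim disjE) (simp_all add: sym f_vals, simp_all add: D_def field_simps power2_eq_square)
qed

lemma fAd_eq_scaleR_if_eigenvalues_equal:
  assumes Q: "orthogonal_matrix Q" and G: "G = Q ** diagm g ** transpose Q"
    and equal: "\<And>i j. g $ i = g $ j"
  shows "fAd f Q g X = f 0 *\<^sub>R X"
proof (rule fAd_eq_by_symbol[OF Q G, where c = "\<lambda>x y. f 0"])
  show "f 0 = f ((g $ i - g $ j) / 2)" for i j
    using equal[of i j] by simp
qed (simp_all add: orth_conj_scaleR schur_mult_def vec_eq_iff)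

lemma fAd_eq_formula2:
  assumes Q: "orthogonal_matrix Q" and G: "G = Q ** diagm g ** transpose Q"
    and "a \<noteq> b" and "\<And>i. g $ i = a \<or> g $ i = b"
  shows "fAd f Q g X = formula2 f a b G X"
  using assms(3,4)
  by (intro fAd_eq_by_symbol[OF Q G formula2_orth_conj[OF Q] formula2_diagm] symbol2_interpolates)

lemma fAd_eq_formula3:
  assumes Q: "orthogonal_matrix Q" and G: "G = Q ** diagm g ** transpose Q"
    and "a \<noteq> b" "b \<noteq> c" "c \<noteq> a" and "\<And>i. g $ i = a \<or> g $ i = b \<or> g $ i = c"
  shows "fAd f Q g X = formula3 f a b c G X"
  using assms(3-6)
  by (intro fAd_eq_by_symbol[OF Q G formula3_orth_conj[OF Q] formula3_diagm] symbol3_interpolates)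

theorem mainTheorem2:
  fixes f :: "real \<Rightarrow> real"
  shows
  "(\<forall>(G :: real^'n^'n) Q g X.
      transpose G = G \<and> orthogonal_matrix Q \<and> G = Q ** diagm g ** transpose Q \<and>
      (CARD('n) = 1 \<or> (\<forall>i j. g $ i = g $ j))
      \<longrightarrow> fAd f Q g X = f 0 *\<^sub>R X)
 \<and> (\<forall>(G :: real^2^2) Q g X.
      transpose G = G \<and> orthogonal_matrix Q \<and> G = Q ** diagm g ** transpose Q \<and>
      g $ 1 \<noteq> g $ 2
      \<longrightarrow> fAd f Q g X = formula2 f (g $ 1) (g $ 2) G X)
 \<and> (\<forall>(G :: real^3^3) Q g X.
      transpose G = G \<and> orthogonal_matrix Q \<and> G = Q ** diagm g ** transpose Q \<and>
      g $ 1 \<noteq> g $ 2 \<and> g $ 2 \<noteq> g $ 3 \<and> g $ 3 \<noteq> g $ 1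
      \<longrightarrow> fAd f Q g X = formula3 f (g $ 1) (g $ 2) (g $ 3) G X)
 \<and> (\<forall>(G :: real^3^3) Q g X a b.
      transpose G = G \<and> orthogonal_matrix Q \<and> G = Q ** diagm g ** transpose Q \<and>
      a \<noteq> b \<and> {g $ 1, g $ 2, g $ 3} = {a, b}
      \<longrightarrow> fAd f Q g X = formula2 f a b G X)"
proof (intro conjI allI impI; elim conjE)
  fix G :: "real^'n^'n" and Q g X
  assume "orthogonal_matrix Q" "G = Q ** diagm g ** transpose Q"
    and "CARD('n) = 1 \<or> (\<forall>i j. g $ i = g $ j)"
  moreover have "CARD('n) = 1 \<Longrightarrow> (i :: 'n) = j" for i j
    by (metis card_1_singletonE UNIV_I singletonD)
  ultimately show "fAd f Q g X = f 0 *\<^sub>R X"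
    by (metis fAd_eq_scaleR_if_eigenvalues_equal)
next
  fix G :: "real^2^2" and Q g X
  assume "orthogonal_matrix Q" "G = Q ** diagm g ** transpose Q" "g $ 1 \<noteq> g $ 2"
  then show "fAd f Q g X = formula2 f (g $ 1) (g $ 2) G X"
    by (rule fAd_eq_formula2) (metis exhaust_2)
next
  fix G :: "real^3^3" and Q g X
  assume "orthogonal_matrix Q" "G = Q ** diagm g ** transpose Q"
    and "g $ 1 \<noteq> g $ 2" "g $ 2 \<noteq> g $ 3" "g $ 3 \<noteq> g $ 1"
  then show "fAd f Q g X = formula3 f (g $ 1) (g $ 2) (g $ 3) G X"
    by (rule fAd_eq_formula3) (metis exhaust_3)
next
  fix G :: "real^3^3" and Q g X a b
  assume "orthogonal_matrix Q" "G = Q ** diagm g ** transpose Q"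
    and "a \<noteq> b" and "{g $ 1, g $ 2, g $ 3} = {a, b}"
  moreover have "g $ i \<in> {g $ 1, g $ 2, g $ 3}" for i :: 3
    using exhaust_3[of i] by auto
  ultimately show "fAd f Q g X = formula2 f a b G X"
    by (intro fAd_eq_formula2) auto
qed

end
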